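(* Let $p$ be a prime, $q=p^l$, $m\ge1$, $n=2m$. Let $r=\rho(q-1)$ with $0\leqslant\rho\leqslant n-1$ and $\rho=2\rho'$ even, and let $I\subseteq M_r$ with $\{0,2\}\cap I=\{0\}$. Let $V$ be an $\mathbb{F}_q$-subspace of $\mathbb{F}_{q^n}$ of dimension $n-\rho$ over $\mathbb{F}_q$ which is not an $\mathbb{F}_{q^2}$-subspace of dimension $m-\rho'$ over $\mathbb{F}_{q^2}$, and let $\lambda\in\mathbb{F}_q^*$. Then the vector $x=(x_g)_{g\in\mathbb{F}_{q^n}^*}$ with $x_g=\lambda$ for $g\in V\setminus\{0\}$ and $x_g=0$ otherwise does not belong to $\mathcal{C}_q(r,I,n)^*$.
   Context: Let $N=q^n-1$ and $\alpha$ a primitive element of $\mathbb{F}_{q^n}$. Every integer $0\le u\le q^n-1$ is written $u=\sum_{i=0}^{n-1}u_iq^i$, $u_i\in\{0,\dots,q-1\}$; $\mathrm{wt}_q(u)=\sum u_i$, $O(u)=\sum_{i\text{ odd}}u_i$, $E(u)=\sum_{i\text{ even}}u_i$. For $-1\le r<n(q-1)$, $Z_r=\{\alpha^u\mid 0<u\le q^n-1,\ \mathrm{wt}_q(u)\le n(q-1)-r-1\}$. For $0\le r\le n(q-1)$ and integer $k\ge0$, $\Theta^{(r)}_k=\{\alpha^u\mid 0\le u\le q^n-1,\ \mathrm{wt}_q(u)=n(q-1)-r,\ |O(u)-E(u)|=k\}$. $M_r$ is the set of even (resp. odd) integers $k\in[0,m(q-1)]$ when $r$ is even (resp. odd). For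 $I\subseteq M_r$: $\overline I=M_r\setminus I$, $Z_{r,I}=Z_r\cup\bigcup_{k\in\overline I}\Theta^{(r)}_k$. $\mathcal{C}_q(r,I,n)^*$ is the cyclic code of length $N$ over $\mathbb{F}_q$ with coordinates indexed by $\mathbb{F}_{q^n}^*$ consisting of all $x=(x_g)$ with $\sum_g x_g g^{u}=0$ for every $u\in[1,N]$ with $\alpha^u\in Z_{r,I}$. *)

theory Defs
  imports Main "HOL-Computational_Algebra.Primes"
begin

definition digit :: "nat \<Rightarrow> nat \<Rightarrow> nat \<Rightarrow> nat" where
  "digit q u i = (u div q ^ i) mod q"

definition wt :: "nat \<Rightarrow> nat \<Rightarrow> nat \<Rightarrow> nat" where
  "wt q n u = (\<Sum>i<n. digit q u i)"

definition Osum :: "nat \<Rightarrow> nat \<Rightarrow> nat \<Rightarrow> nat" where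
  "Osum q n u = (\<Sum>i\<in>{i. i < n \<and> odd i}. digit q u i)"

definition Esum :: "nat \<Rightarrow> nat \<Rightarrow> nat \<Rightarrow> nat" where
  "Esum q n u = (\<Sum>i\<in>{i. i < n \<and> even i}. digit q u i)"

text \<open>The subfield F_q of a finite field (of order a power of q): the roots of X^q - X.\<close>
definition Fsub :: "nat \<Rightarrow> 'a::field set" where
  "Fsub q = {x. x ^ q = x}"

definition primitive_elem :: "'a::field \<Rightarrow> bool" where
  "primitive_elem \<alpha> \<longleftrightarrow> \<alpha> \<noteq> 0 \<and> (\<forall>g. g \<noteq> 0 \<longrightarrow> (\<exists>i::nat. \<alpha> ^ i = g))"

definition subspace_over :: "'a::field set \<Rightarrow> 'a set \<Rightarrow> bool" where
  "subspace_over K V \<longleftrightarrow> 0 \<in> V \<and> (\<forall>x\<in>V. \<forall>y\<in>V. x + y \<in> V)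
      \<and> (\<forall>c\<in>K. \<forall>x\<in>V. c * x \<in> V)"

definition dim_over :: "'a::field set \<Rightarrow> 'a set \<Rightarrow> nat \<Rightarrow> bool" where
  "dim_over K V d \<longleftrightarrow> subspace_over K V \<and>
     (\<exists>b :: nat \<Rightarrow> 'a. (\<forall>i<d. b i \<in> V)
        \<and> (\<forall>c. (\<forall>i<d. c i \<in> K) \<longrightarrow> (\<Sum>i<d. c i * b i) = 0 \<longrightarrow> (\<forall>i<d. c i = 0))
        \<and> (\<forall>v\<in>V. \<exists>c. (\<forall>i<d. c i \<in> K) \<and> v = (\<Sum>i<d. c i * b i)))"

definition Zr :: "nat \<Rightarrow> nat \<Rightarrow> 'a::field \<Rightarrow> int \<Rightarrow> 'a set" where
  "Zr q n \<alpha> r = {\<alpha> ^ u | u. 0 < u \<and> u \<le> q ^ n - 1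
      \<and> int (wt q n u) \<le> int (n * (q - 1)) - r - 1}"

definition Theta :: "nat \<Rightarrow> nat \<Rightarrow> 'a::field \<Rightarrow> int \<Rightarrow> nat \<Rightarrow> 'a set" where
  "Theta q n \<alpha> r k = {\<alpha> ^ u | u. u \<le> q ^ n - 1
      \<and> int (wt q n u) = int (n * (q - 1)) - r
      \<and> \<bar>int (Osum q n u) - int (Esum q n u)\<bar> = int k}"

definition Mr :: "nat \<Rightarrow> nat \<Rightarrow> int \<Rightarrow> nat set" where
  "Mr q m r = {k. k \<le> m * (q - 1) \<and> (even (int k) \<longleftrightarrow> even r)}"

definition ZrI :: "nat \<Rightarrow> nat \<Rightarrow> nat \<Rightarrow> 'a::field \<Rightarrow> int \<Rightarrow> nat set \<Rightarrow> 'a set" where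
  "ZrI q n m \<alpha> r I = Zr q n \<alpha> r \<union> (\<Union>k\<in>Mr q m r - I. Theta q n \<alpha> r k)"

text \<open>The code C_q(r,I,n)^*: words are functions on F_{q^n} whose coordinates at
  the nonzero elements lie in F_q (the coordinate at 0 is not a coordinate; fixed to 0).\<close>
definition code :: "nat \<Rightarrow> nat \<Rightarrow> nat \<Rightarrow> 'a::{finite,field} \<Rightarrow> int \<Rightarrow> nat set \<Rightarrow> ('a \<Rightarrow> 'a) set" where
  "code q n m \<alpha> r I = {x. x 0 = 0 \<and> (\<forall>g. g \<noteq> 0 \<longrightarrow> x g \<in> Fsub q) \<and>
      (\<forall>u\<in>{1..q ^ n - 1}. \<alpha> ^ u \<in> ZrI q n m \<alpha> r I \<longrightarrow>
          (\<Sum>g\<in>{g. g \<noteq> 0}. x g * g ^ u) = 0)}"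

end

(* Let L(x) = \<Prod>g\<in>V. (x - g) = \<Sum>j\<le>k. c_j x^(q^j) be the subspace polynomial of the
   F_q-subspace V, of dimension k = n - \<rho>. If c_j vanished for all odd j, then L(a x) = a L(x) for
   every a in F_(q^2), so V would be an F_(q^2)-subspace, necessarily of dimension k/2 = m - \<rho>'.
   Hence some odd i < k has c_i \<noteq> 0. The power sums S_t = \<Sum>g\<in>V. g^t vanish for t < q^k - 1
   and S_(q^k - 1) \<noteq> 0; combined with \<Sum>g\<in>V. g^w L(g) = 0 this gives
   S_u = - c_i S_(q^k - 1) \<noteq> 0 for u = 2 q^k - q^i - 1. The exponent u has q-weight
   k (q - 1) = n (q - 1) - r and |O(u) - E(u)| = 2, so \<alpha>^u lies in Theta_2 with 2 \<notin> I; the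
   parity check at u is c S_u \<noteq> 0. *)

theory Submission
  imports Defs "HOL-Computational_Algebra.Polynomial" "HOL-Number_Theory.Residues"
begin

lemma CHAR_eq_if_card_prime_power:
  assumes "prime p" "card (UNIV :: 'a::{finite,field} set) = p ^ N"
  shows "CHAR('a) = p"
proof -
  have "prime CHAR('a)"
    by (simp add: finite_imp_CHAR_pos prime_CHAR_semidom)
  moreover have "CHAR('a) dvd p ^ N"
    using CHAR_dvd_CARD[where 'a='a] assms(2) by simp
  ultimately show ?thesis
    using assms(1) prime_dvd_power primes_dvd_imp_eq by blast
qed

lemma frobenius_diff:
  assumes "prime CHAR('a::comm_ring_1)" "s = CHAR('a) ^ e"
  shows "(x - y :: 'a) ^ s = x ^ s - y ^ s"
  using freshmans_dream'[OF assms, of "x - y" y] by simp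

definition is_subfield :: "'a::field set \<Rightarrow> bool" where
  "is_subfield K \<longleftrightarrow> 0 \<in> K \<and> 1 \<in> K \<and> (\<forall>x\<in>K. \<forall>y\<in>K. x + y \<in> K \<and> x * y \<in> K)
     \<and> (\<forall>x\<in>K. - x \<in> K \<and> inverse x \<in> K)"

lemma is_subfieldD:
  assumes "is_subfield K"
  shows "0 \<in> K" "1 \<in> K" "x \<in> K \<Longrightarrow> y \<in> K \<Longrightarrow> x + y \<in> K"
    "x \<in> K \<Longrightarrow> y \<in> K \<Longrightarrow> x * y \<in> K" "x \<in> K \<Longrightarrow> - x \<in> K"
    "x \<in> K \<Longrightarrow> inverse x \<in> K"
    "x \<in> K \<Longrightarrow> y \<in> K \<Longrightarrow> x - y \<in> K"
    "x \<in> K \<Longrightarrow> y \<in> K \<Longrightarrow> x / y \<in> K"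
  using assms unfolding is_subfield_def diff_conv_add_uminus divide_inverse by blast+

lemma Fsub_is_subfield:
  assumes "prime CHAR('a::field)" "s = CHAR('a) ^ e"
  shows "is_subfield (Fsub s :: 'a set)"
proof -
  have "s > 0"
    using assms prime_gt_0_nat by simp
  moreover have "(- x) ^ s = - (x ^ s)" for x :: 'a
    using frobenius_diff[OF assms, of 0 x] \<open>s > 0\<close> by (simp add: power_0_left)
  ultimately show ?thesis
    unfolding is_subfield_def Fsub_def
    by (auto simp: freshmans_dream'[OF assms] power_mult_distrib power_inverse)
qed

lemma Fsub_power_power:
  assumes "a \<in> Fsub q"
  shows "a ^ (q ^ j) = a"
proof (induction j)
  case (Suc j)
  have "a ^ (q ^ Suc j) = (a ^ (q ^ j)) ^ q"
    by (simp add: power_mult[symmetric] mult.commute)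
  with Suc assms show ?case
    by (simp add: Fsub_def)
qed simp

lemma period_ge_if_primitive_elem:
  fixes \<alpha> :: "'a::{finite,field}"
  assumes prim: "primitive_elem \<alpha>" and d: "d > 0" "\<alpha> ^ d = 1"
  shows "card (UNIV :: 'a set) - 1 \<le> d"
proof -
  have "UNIV - {0} \<subseteq> (\<lambda>i. \<alpha> ^ i) ` {..<d}"
  proof
    fix g :: 'a assume "g \<in> UNIV - {0}"
    then obtain i where "g = \<alpha> ^ i"
      using prim unfolding primitive_elem_def by auto
    also have "\<alpha> ^ i = (\<alpha> ^ d) ^ (i div d) * \<alpha> ^ (i mod d)"
      by (simp flip: power_mult power_add)
    finally show "g \<in> (\<lambda>i. \<alpha> ^ i) ` {..<d}"
      using d by auto
  qed
  then have "card (UNIV - {0 :: 'a}) \<le> card ((\<lambda>i. \<alpha> ^ i) ` {..<d})"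
    by (intro card_mono) auto
  also have "\<dots> \<le> d"
    using card_image_le[of "{..<d}"] by simp
  finally show ?thesis
    by (simp add: card_Diff_singleton)
qed

lemma exists_period_le_card:
  fixes x :: "'a::{finite,field}"
  assumes "x \<noteq> 0"
  obtains d where "d > 0" "d \<le> card (UNIV :: 'a set) - 1" "x ^ d = 1"
proof -
  let ?N = "card (UNIV :: 'a set) - 1"
  have "\<not> inj_on (\<lambda>i. x ^ i) {..?N}"
  proof
    assume "inj_on (\<lambda>i. x ^ i) {..?N}"
    then have "card {..?N} \<le> card (UNIV - {0 :: 'a})"
      using assms by (intro card_inj_on_le) auto
    then show False
      by (simp add: card_Diff_singleton)
  qed
  then obtain i j where "i < j" "j \<le> ?N" "x ^ i = x ^ j"
    unfolding inj_on_def by (metis atMost_iff linorder_neqE_nat)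
  with assms show ?thesis
    using that[of "j - i"] by (simp add: power_diff)
qed

lemma primitive_elem_power_eq_one_iff:
  fixes \<alpha> :: "'a::{finite,field}"
  assumes prim: "primitive_elem \<alpha>"
  shows "\<alpha> ^ e = 1 \<longleftrightarrow> (card (UNIV :: 'a set) - 1) dvd e"
proof -
  let ?N = "card (UNIV :: 'a set) - 1"
  define d where "d = (LEAST d. d > 0 \<and> \<alpha> ^ d = 1)"
  obtain d' where "d' > 0" "d' \<le> ?N" "\<alpha> ^ d' = 1"
    using exists_period_le_card prim unfolding primitive_elem_def by blast
  then have d: "d > 0" "\<alpha> ^ d = 1" "d \<le> ?N"
    unfolding d_def by (metis (mono_tags, lifting) LeastI Least_le le_trans)+
  then have "d = ?N"
    using period_ge_if_primitive_elem[OF prim] by (simp add: le_antisym)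
  have "\<alpha> ^ e = (\<alpha> ^ d) ^ (e div d) * \<alpha> ^ (e mod d)"
    by (simp flip: power_mult power_add)
  then have "\<alpha> ^ e = \<alpha> ^ (e mod d)"
    using d(2) by simp
  moreover have "\<alpha> ^ (e mod d) \<noteq> 1" if "e mod d > 0"
    using that d(1) not_less_Least[of "e mod d" "\<lambda>d. d > 0 \<and> \<alpha> ^ d = 1"]
    unfolding d_def by auto
  ultimately show ?thesis
    using \<open>d = ?N\<close> by (metis dvd_eq_mod_eq_0 gr0I power_0)
qed

lemma inj_on_primitive_elem_power:
  fixes \<alpha> :: "'a::{finite,field}"
  assumes prim: "primitive_elem \<alpha>"
  shows "inj_on (\<lambda>i. \<alpha> ^ i) {..<card (UNIV :: 'a set) - 1}"
proof -
  let ?N = "card (UNIV :: 'a set) - 1"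
  have "i = j" if "\<alpha> ^ i = \<alpha> ^ j" "i \<le> j" "j < ?N" for i j
  proof -
    have "\<alpha> ^ j = \<alpha> ^ i * \<alpha> ^ (j - i)"
      using that(2) by (simp flip: power_add)
    then have "?N dvd (j - i)"
      using that(1) prim primitive_elem_power_eq_one_iff[OF prim]
      unfolding primitive_elem_def by simp
    then show "i = j"
      using that(2,3) nat_dvd_not_less[of "j - i" ?N] by linarith
  qed
  then show ?thesis
    unfolding inj_on_def by (metis lessThan_iff nat_le_linear)
qed

lemma card_Fsub_le:
  assumes "s \<ge> 2"
  shows "card (Fsub s :: 'a::{finite,field} set) \<le> s"
proof -
  define P :: "'a poly" where "P = Polynomial.monom 1 s - [:0, 1:]"
  have "degree P = s"
    unfolding P_def diff_conv_add_uminus using assms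
    by (subst degree_add_eq_left) (auto simp: degree_monom_eq)
  then have "P \<noteq> 0"
    using assms by auto
  moreover have "Fsub s = {x. poly P x = 0}"
    unfolding P_def Fsub_def by (auto simp: poly_monom)
  ultimately show ?thesis
    using card_poly_roots_bound \<open>degree P = s\<close> by metis
qed

lemma card_Fsub:
  fixes \<alpha> :: "'a::{finite,field}"
  assumes prim: "primitive_elem \<alpha>" and "s \<ge> 2"
    and "(s - 1) dvd (card (UNIV :: 'a set) - 1)"
  shows "card (Fsub s :: 'a set) = s"
proof -
  let ?N = "card (UNIV :: 'a set) - 1"
  obtain t where Nt: "?N = (s - 1) * t"
    using assms(3) by blast
  have "card {0, 1 :: 'a} \<le> card (UNIV :: 'a set)"
    by (intro card_mono) auto
  then have "t > 0"
    using Nt by (cases t) auto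
  \<comment> \<open>the \<open>s - 1\<close> distinct powers \<open>\<alpha>\<^bsup>j t\<^esup>\<close> are the roots of \<open>x\<^bsup>s - 1\<^esup> = 1\<close>\<close>
  have inj: "inj_on (\<lambda>j. \<alpha> ^ (j * t)) {..<s - 1}"
  proof (rule comp_inj_on[of "\<lambda>j. j * t" _ "\<lambda>i. \<alpha> ^ i", unfolded comp_def])
    show "inj_on (\<lambda>j. j * t) {..<s - 1}"
      using \<open>t > 0\<close> by (simp add: inj_on_def)
    show "inj_on (\<lambda>i. \<alpha> ^ i) ((\<lambda>j. j * t) ` {..<s - 1})"
      using \<open>t > 0\<close> Nt by (intro inj_on_subset[OF inj_on_primitive_elem_power[OF prim]]) auto
  qed
  have roots: "(\<lambda>j. \<alpha> ^ (j * t)) ` {..<s - 1} \<subseteq> Fsub s - {0}"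
  proof clarify
    fix j
    have "(\<alpha> ^ (j * t)) ^ (s - 1) = (\<alpha> ^ ?N) ^ j"
      unfolding Nt by (simp flip: power_mult add: mult_ac)
    also have "\<dots> = 1"
      using primitive_elem_power_eq_one_iff[OF prim, of ?N] by simp
    finally have "(\<alpha> ^ (j * t)) ^ s = \<alpha> ^ (j * t)"
      using \<open>s \<ge> 2\<close> by (simp add: power_eq_if)
    moreover have "\<alpha> ^ (j * t) \<noteq> 0"
      using prim unfolding primitive_elem_def by simp
    ultimately show "\<alpha> ^ (j * t) \<in> Fsub s - {0}"
      by (simp add: Fsub_def)
  qed
  have "s - 1 \<le> card (Fsub s - {0 :: 'a})"
    using card_mono[OF _ roots] card_image[OF inj] by simp
  moreover have "(0 :: 'a) \<in> Fsub s"
    using \<open>s \<ge> 2\<close> by (simp add: Fsub_def)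
  ultimately have "s \<le> card (Fsub s :: 'a set)"
    using card_gt_0_iff[of "Fsub s :: 'a set"] by (auto simp: card_Diff_singleton)
  with card_Fsub_le[OF \<open>s \<ge> 2\<close>, where 'a = 'a] show ?thesis
    by linarith
qed

lemma diff_one_dvd_power_diff_one:
  fixes x :: nat
  shows "(x - 1) dvd (x ^ n - 1)"
proof (cases "x = 0")
  case False
  then have "int (x ^ n - 1) = int (x - 1) * (\<Sum>i<n. int x ^ i)"
    by (simp add: of_nat_diff power_diff_1_eq)
  then show ?thesis
    by (metis dvd_triv_left int_dvd_int_iff)
qed (cases n, simp_all)

lemma card_Fsub_power:
  fixes \<alpha> :: "'a::{finite,field}"
  assumes "primitive_elem \<alpha>" "q \<ge> 2" "card (UNIV :: 'a set) = q ^ n" "s > 0" "s dvd n"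
  shows "card (Fsub (q ^ s) :: 'a set) = q ^ s"
proof (rule card_Fsub[OF assms(1)])
  show "q ^ s \<ge> 2"
    using assms(2,4) self_le_power[of q s] by simp
  obtain t where "n = s * t"
    using assms(5) ..
  then show "(q ^ s - 1) dvd (card (UNIV :: 'a set) - 1)"
    using assms(3) diff_one_dvd_power_diff_one[of "q ^ s" t] by (simp add: power_mult)
qed

lemma prod_Fsub_diff:
  assumes "card (Fsub q :: 'a::{finite,field} set) = q" "q \<ge> 2"
  shows "(\<Prod>a\<in>Fsub q. y - a) = y ^ q - (y :: 'a)"
proof -
  define P1 :: "'a poly" where "P1 = (\<Prod>a\<in>Fsub q. [:- a, 1:])"
  define P2 :: "'a poly" where "P2 = Polynomial.monom 1 q - [:0, 1:]"
  have deg2: "degree P2 = q"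
    unfolding P2_def diff_conv_add_uminus using assms
    by (subst degree_add_eq_left) (auto simp: degree_monom_eq)
  have deg1: "degree P1 = q"
    unfolding P1_def by (subst degree_prod_eq_sum_degree) (auto simp: assms)
  have "P1 = P2"
  proof (rule poly_eqI_degree_lead_coeff[where n = q and A = "Fsub q"])
    have "lead_coeff P1 = 1"
      unfolding P1_def by (simp add: lead_coeff_prod)
    then show "Polynomial.coeff P1 q = Polynomial.coeff P2 q"
      using deg1 assms(2) unfolding P2_def by (simp add: coeff_pCons split: nat.split)
    fix z :: 'a assume "z \<in> Fsub q"
    then show "poly P1 z = poly P2 z"
      unfolding P1_def P2_def Fsub_def by (simp add: poly_prod poly_monom prod_zero_iff)
  qed (use assms deg1 deg2 in auto)
  then have "poly P1 y = poly P2 y"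
    by simp
  then show ?thesis
    unfolding P1_def P2_def by (simp add: poly_prod poly_monom)
qed

lemma prod_Fsub_diff_mult:
  assumes "card (Fsub q :: 'a::{finite,field} set) = q" "q \<ge> 2"
  shows "(\<Prod>a\<in>Fsub q. y - a * \<beta>) = y ^ q - \<beta> ^ (q - 1) * (y :: 'a)"
proof (cases "\<beta> = 0")
  case False
  have "(\<Prod>a\<in>Fsub q. y - a * \<beta>) = (\<Prod>a\<in>Fsub q. \<beta> * (y / \<beta> - a))"
    using False by (intro prod.cong) (auto simp: field_simps)
  also have "\<dots> = \<beta> ^ q * ((y / \<beta>) ^ q - y / \<beta>)"
    by (simp add: prod.distrib assms prod_Fsub_diff)
  also have "\<dots> = y ^ q - \<beta> ^ q / \<beta> * y"
    using False by (simp add: field_simps power_divide)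
  also have "\<beta> ^ q / \<beta> = \<beta> ^ (q - 1)"
    using False assms(2) by (simp add: power_diff)
  finally show ?thesis .
qed (use assms in simp)

lemma sum_lessThan_Suc_fun_upd:
  "(\<Sum>i<Suc t. (c(t := a)) i * b i) = (\<Sum>i<t. c i * b i) + a * b t"
proof -
  have "(\<Sum>i<t. (c(t := a)) i * b i) = (\<Sum>i<t. c i * b i)"
    by (intro sum.cong) auto
  then show ?thesis
    by simp
qed

fun span_over :: "'a::field set \<Rightarrow> (nat \<Rightarrow> 'a) \<Rightarrow> nat \<Rightarrow> 'a set" where
  "span_over K b 0 = {0}"
| "span_over K b (Suc t) = (\<lambda>(a, g). g + a * b t) ` (K \<times> span_over K b t)"

lemma mem_span_over_iff:
  "v \<in> span_over K b t \<longleftrightarrow> (\<exists>c. (\<forall>i<t. c i \<in> K) \<and> v = (\<Sum>i<t. c i * b i))"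
proof (induction t arbitrary: v)
  case (Suc t)
  show ?case
  proof
    assume "v \<in> span_over K b (Suc t)"
    then obtain a g where ag: "a \<in> K" "g \<in> span_over K b t" "v = g + a * b t"
      by auto
    then obtain c where c: "\<forall>i<t. c i \<in> K" "g = (\<Sum>i<t. c i * b i)"
      using Suc by auto
    have "v = (\<Sum>i<Suc t. (c(t := a)) i * b i)"
      using ag c(2) sum_lessThan_Suc_fun_upd[of c t a b] by simp
    moreover have "\<forall>i<Suc t. (c(t := a)) i \<in> K"
      using c ag by (auto simp: less_Suc_eq)
    ultimately show "\<exists>c. (\<forall>i<Suc t. c i \<in> K) \<and> v = (\<Sum>i<Suc t. c i * b i)"
      by blast
  next
    assume "\<exists>c. (\<forall>i<Suc t. c i \<in> K) \<and> v = (\<Sum>i<Suc t. c i * b i)"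
    then obtain c where c: "\<forall>i<Suc t. c i \<in> K" "v = (\<Sum>i<t. c i * b i) + c t * b t"
      by auto
    moreover have "(\<Sum>i<t. c i * b i) \<in> span_over K b t"
      unfolding Suc.IH using c(1) by (intro exI[of _ c]) simp
    ultimately show "v \<in> span_over K b (Suc t)"
      by force
  qed
qed simp

lemma span_over_cong: "(\<And>i. i < t \<Longrightarrow> b i = b' i) \<Longrightarrow> span_over K b t = span_over K b' t"
  by (induction t) auto

lemma subspace_over_diff:
  assumes "is_subfield K" "subspace_over K V" "x \<in> V" "y \<in> V"
  shows "x - y \<in> V"
proof -
  have "(- 1) * y \<in> V"
    using assms is_subfieldD(2,5)[OF assms(1)] unfolding subspace_over_def by blast
  then show ?thesis
    using assms unfolding subspace_over_def by (metis diff_conv_add_uminus mult_minus1)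
qed

lemma subspace_over_span_over:
  assumes "is_subfield K"
  shows "subspace_over K (span_over K b t)"
  unfolding subspace_over_def
proof (intro conjI ballI)
  show "0 \<in> span_over K b t"
    unfolding mem_span_over_iff using is_subfieldD(1)[OF assms]
    by (intro exI[of _ "\<lambda>_. 0"]) simp
  fix x y a
  assume x: "x \<in> span_over K b t"
  then obtain c where c: "\<forall>i<t. c i \<in> K" "x = (\<Sum>i<t. c i * b i)"
    unfolding mem_span_over_iff by blast
  assume "a \<in> K"
  then show "a * x \<in> span_over K b t"
    unfolding mem_span_over_iff using c is_subfieldD(4)[OF assms]
    by (intro exI[of _ "\<lambda>i. a * c i"]) (simp add: sum_distrib_left mult.assoc)
next
  fix x y
  assume "x \<in> span_over K b t" "y \<in> span_over K b t"
  then obtain c d where "\<forall>i<t. c i \<in> K" "x = (\<Sum>i<t. c i * b i)"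
    and "\<forall>i<t. d i \<in> K" "y = (\<Sum>i<t. d i * b i)"
    unfolding mem_span_over_iff by blast
  then show "x + y \<in> span_over K b t"
    unfolding mem_span_over_iff using is_subfieldD(3)[OF assms]
    by (intro exI[of _ "\<lambda>i. c i + d i"]) (simp add: sum.distrib distrib_right)
qed

lemma span_over_subset:
  assumes "subspace_over K V" "\<And>i. i < t \<Longrightarrow> b i \<in> V"
  shows "span_over K b t \<subseteq> V"
  using assms(2)
proof (induction t)
  case (Suc t)
  then show ?case
    using assms(1) unfolding subspace_over_def by auto
qed (use assms(1) in \<open>simp add: subspace_over_def\<close>)

definition indep_over :: "'a::field set \<Rightarrow> (nat \<Rightarrow> 'a) \<Rightarrow> nat \<Rightarrow> bool" where
  "indep_over K b t \<longleftrightarrow>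
     (\<forall>c. (\<forall>i<t. c i \<in> K) \<longrightarrow> (\<Sum>i<t. c i * b i) = 0 \<longrightarrow> (\<forall>i<t. c i = 0))"

lemma indep_over_cong:
  assumes "\<And>i. i < t \<Longrightarrow> b i = b' i"
  shows "indep_over K b t = indep_over K b' t"
proof -
  have "(\<Sum>i<t. c i * b i) = (\<Sum>i<t. c i * b' i)" for c
    using assms by (intro sum.cong) auto
  then show ?thesis
    unfolding indep_over_def by simp
qed

lemma indep_over_SucD:
  assumes K: "is_subfield K" and ind: "indep_over K b (Suc t)"
  shows "indep_over K b t" and "b t \<notin> span_over K b t"
proof -
  show "indep_over K b t"
    unfolding indep_over_def
  proof (rule allI, intro impI)
    fix c assume "\<forall>i<t. c i \<in> K" "(\<Sum>i<t. c i * b i) = 0"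
    then have "\<forall>i<Suc t. (c(t := 0)) i \<in> K" "(\<Sum>i<Suc t. (c(t := 0)) i * b i) = 0"
      using is_subfieldD(1)[OF K] sum_lessThan_Suc_fun_upd[of c t 0] by (auto simp: less_Suc_eq)
    then have "\<forall>i<Suc t. (c(t := 0)) i = 0"
      using ind unfolding indep_over_def by blast
    then show "\<forall>i<t. c i = 0"
      by (metis fun_upd_other less_Suc_eq less_irrefl)
  qed
  show "b t \<notin> span_over K b t"
  proof
    assume "b t \<in> span_over K b t"
    then obtain c where "\<forall>i<t. c i \<in> K" "b t = (\<Sum>i<t. c i * b i)"
      unfolding mem_span_over_iff by blast
    then have "\<forall>i<Suc t. (c(t := - 1)) i \<in> K" "(\<Sum>i<Suc t. (c(t := - 1)) i * b i) = 0"
      using is_subfieldD(2,5)[OF K] sum_lessThan_Suc_fun_upd[of c t "- 1"]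
      by (auto simp: less_Suc_eq)
    then have "(c(t := - 1)) t = 0"
      using ind unfolding indep_over_def by blast
    then show False
      by simp
  qed
qed

lemma indep_over_SucI:
  assumes K: "is_subfield K" and ind: "indep_over K b t" and new: "b t \<notin> span_over K b t"
  shows "indep_over K b (Suc t)"
  unfolding indep_over_def
proof (rule allI, intro impI)
  fix c assume cK: "\<forall>i<Suc t. c i \<in> K" and rel: "(\<Sum>i<Suc t. c i * b i) = 0"
  have "c t = 0"
  proof (rule ccontr)
    assume "c t \<noteq> 0"
    let ?S = "\<Sum>i<t. c i * b i"
    have "c t * b t = - ?S"
      using rel by (simp add: eq_neg_iff_add_eq_0 add.commute)
    then have "b t = - inverse (c t) * ?S"
      using \<open>c t \<noteq> 0\<close> by (simp add: field_simps)
    moreover have "?S \<in> span_over K b t"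
      unfolding mem_span_over_iff using cK by (intro exI[of _ c]) simp
    moreover have "- inverse (c t) \<in> K"
      using cK is_subfieldD(5,6)[OF K] by simp
    ultimately show False
      using new subspace_over_span_over[OF K] unfolding subspace_over_def by metis
  qed
  then have "\<forall>i<t. c i = 0"
    using ind cK rel unfolding indep_over_def by auto
  with \<open>c t = 0\<close> show "\<forall>i<Suc t. c i = 0"
    by (auto simp: less_Suc_eq)
qed

lemma inj_on_span_over_Suc:
  assumes K: "is_subfield K" and new: "b t \<notin> span_over K b t"
  shows "inj_on (\<lambda>(a, g). g + a * b t) (K \<times> span_over K b t)"
proof (rule inj_onI, clarsimp)
  fix a g a' g'
  assume a: "a \<in> K" "a' \<in> K" and g: "g \<in> span_over K b t" "g' \<in> span_over K b t"
    and eq: "g + a * b t = g' + a' * b t"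
  have "a = a'"
  proof (rule ccontr)
    assume "a \<noteq> a'"
    then have "b t = inverse (a' - a) * (g - g')"
      using eq by (simp add: field_simps)
    moreover have "inverse (a' - a) \<in> K"
      using is_subfieldD[OF K] a by auto
    moreover have "g - g' \<in> span_over K b t"
      using subspace_over_diff[OF K subspace_over_span_over[OF K] g] .
    ultimately show False
      using new subspace_over_span_over[OF K] unfolding subspace_over_def by metis
  qed
  with eq show "a = a' \<and> g = g'"
    by simp
qed

lemma card_span_over:
  assumes "is_subfield K" "finite K" "indep_over K b t"
  shows "card (span_over K b t) = card K ^ t"
  using assms(3)
proof (induction t)
  case (Suc t)
  then have "indep_over K b t" "b t \<notin> span_over K b t"
    using indep_over_SucD[OF assms(1)] by auto
  then show ?case
    using card_image[OF inj_on_span_over_Suc[OF assms(1)]] Suc.IH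
    by (simp add: card_cartesian_product)
qed simp

lemma indep_over_less_card:
  assumes K: "is_subfield K" "finite K" "card K \<ge> 2"
    and V: "subspace_over K V" "finite V"
    and b: "\<And>i. i < t \<Longrightarrow> b i \<in> V" "indep_over K b t"
  shows "t < card V"
proof -
  have "t < 2 ^ t"
    by (rule less_exp)
  also have "\<dots> \<le> card K ^ t"
    using K(3) by (rule power_mono) simp
  also have "\<dots> = card (span_over K b t)"
    by (rule card_span_over[OF K(1,2) b(2), symmetric])
  also have "\<dots> \<le> card V"
    using span_over_subset[OF V(1) b(1)] by (rule card_mono[OF V(2)])
  finally show ?thesis .
qed

lemma exists_basis_over:
  assumes K: "is_subfield K" "finite K" "card K \<ge> 2"
    and V: "subspace_over K V" "finite V"
  shows "\<exists>d b. (\<forall>i<d. b i \<in> V) \<and> indep_over K b d \<and> span_over K b d = V"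
proof -
  \<comment> \<open>extend an independent family inside \<open>V\<close> until it spans; \<open>card V + 1\<close> vectors are too many\<close>
  have grow: "(\<exists>b. (\<forall>i<j. b i \<in> V) \<and> indep_over K b j)
      \<or> (\<exists>d b. (\<forall>i<d. b i \<in> V) \<and> indep_over K b d \<and> span_over K b d = V)" for j
  proof (induction j)
    case 0
    then show ?case
      by (simp add: indep_over_def)
  next
    case (Suc j)
    show ?case
    proof (cases "\<exists>b. (\<forall>i<j. b i \<in> V) \<and> indep_over K b j \<and> span_over K b j \<noteq> V")
      case True
      then obtain b where b: "\<forall>i<j. b i \<in> V" "indep_over K b j" "span_over K b j \<noteq> V"
        by blast
      then obtain v where v: "v \<in> V" "v \<notin> span_over K b j"
        using span_over_subset[OF V(1)] by blast
      have "indep_over K (b(j := v)) (Suc j)"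
      proof (rule indep_over_SucI[OF K(1)])
        show "indep_over K (b(j := v)) j"
          using indep_over_cong[of j "b(j := v)" b K] b(2) by simp
        show "(b(j := v)) j \<notin> span_over K (b(j := v)) j"
          using span_over_cong[of j "b(j := v)" b K] v by simp
      qed
      moreover have "\<forall>i<Suc j. (b(j := v)) i \<in> V"
        using b v by (auto simp: less_Suc_eq)
      ultimately show ?thesis
        by blast
    qed (use Suc in blast)
  qed
  have "\<not> (\<exists>b. (\<forall>i<card V + 1. b i \<in> V) \<and> indep_over K b (card V + 1))"
  proof
    assume "\<exists>b. (\<forall>i<card V + 1. b i \<in> V) \<and> indep_over K b (card V + 1)"
    then have "card V + 1 < card V"
      using indep_over_less_card[OF K V] by blast
    then show False
      by simp
  qed
  with grow[of "card V + 1"] show ?thesis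
    by blast
qed

lemma dim_over_imp_span_over:
  assumes "dim_over K V d"
  obtains b where "indep_over K b d" "span_over K b d = V"
proof -
  obtain b where b: "\<forall>i<d. b i \<in> V" "indep_over K b d" "\<forall>v\<in>V. v \<in> span_over K b d"
    using assms unfolding dim_over_def indep_over_def mem_span_over_iff by blast
  moreover have "span_over K b d \<subseteq> V"
    using assms b(1) span_over_subset unfolding dim_over_def by blast
  ultimately show ?thesis
    using that by blast
qed

lemma card_dim_over:
  assumes "is_subfield K" "finite K" "dim_over K V d"
  shows "card V = card K ^ d"
proof -
  obtain b where "indep_over K b d" "span_over K b d = V"
    using dim_over_imp_span_over[OF assms(3)] .
  then show ?thesis
    using card_span_over[OF assms(1,2)] by blast
qed

lemma dim_over_if_card:
  assumes K: "is_subfield K" "finite K" "card K \<ge> 2"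
    and V: "subspace_over K V" "finite V" "card V = card K ^ d"
  shows "dim_over K V d"
proof -
  obtain d' b where b: "\<forall>i<d'. b i \<in> V" "indep_over K b d'" "span_over K b d' = V"
    using exists_basis_over[OF K V(1,2)] by blast
  then have "card K ^ d' = card K ^ d"
    using card_span_over[OF K(1,2) b(2)] V(3) by simp
  then have "d' = d"
    using K(3) by (simp add: power_inject_exp)
  moreover have "\<forall>v\<in>V. \<exists>c. (\<forall>i<d'. c i \<in> K) \<and> v = (\<Sum>i<d'. c i * b i)"
    using b(3) mem_span_over_iff by blast
  ultimately show ?thesis
    using V(1) b(1,2) unfolding dim_over_def indep_over_def by blast
qed

lemma prod_span_over_Suc:
  assumes "is_subfield K" "b t \<notin> span_over K b t"
  shows "(\<Prod>g\<in>span_over K b (Suc t). f g) = (\<Prod>a\<in>K. \<Prod>g\<in>span_over K b t. f (g + a * b t))"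
proof -
  have "(\<Prod>g\<in>span_over K b (Suc t). f g) = (\<Prod>(a, g)\<in>K \<times> span_over K b t. f (g + a * b t))"
    using prod.reindex[OF inj_on_span_over_Suc[OF assms]] by (simp add: case_prod_unfold)
  also have "\<dots> = (\<Prod>a\<in>K. \<Prod>g\<in>span_over K b t. f (g + a * b t))"
    by (rule prod.cartesian_product[symmetric])
  finally show ?thesis .
qed

lemma linearized_diff:
  assumes "prime CHAR('a::field)" "q = CHAR('a) ^ e"
  shows "(\<Sum>j\<le>t. c j * (x - y :: 'a) ^ (q ^ j))
    = (\<Sum>j\<le>t. c j * x ^ (q ^ j)) - (\<Sum>j\<le>t. c j * y ^ (q ^ j))"
  using frobenius_diff[OF assms(1), of "q ^ j" "e * j" for j] assms(2)
  by (simp add: power_mult right_diff_distrib sum_subtractf)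

lemma linearized_smult:
  assumes "a \<in> Fsub q"
  shows "(\<Sum>j\<le>t. c j * (a * y) ^ (q ^ j)) = a * (\<Sum>j\<le>t. c j * y ^ (q ^ j))"
  unfolding sum_distrib_left
  using Fsub_power_power[OF assms] by (intro sum.cong) (auto simp: power_mult_distrib)

lemma linearized_power:
  assumes "prime CHAR('a::field)" "q = CHAR('a) ^ e"
  shows "(\<Sum>j\<le>t. c j * x ^ (q ^ j)) ^ q
    = (\<Sum>j\<le>Suc t. (if j = 0 then 0 else c (j - 1) ^ q) * (x :: 'a) ^ (q ^ j))"
proof -
  have "(\<Sum>j\<le>t. c j * x ^ (q ^ j)) ^ q = (\<Sum>j\<le>t. c j ^ q * x ^ (q ^ Suc j))"
    unfolding freshmans_dream_sum'[OF assms]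
    by (simp add: power_mult_distrib mult.commute flip: power_mult)
  also have "\<dots> = (\<Sum>j\<le>Suc t. (if j = 0 then 0 else c (j - 1) ^ q) * x ^ (q ^ j))"
    by (subst sum.atMost_Suc_shift) simp
  finally show ?thesis .
qed

text \<open>Adjoining a basis vector \<open>b\<close> to a subspace with subspace polynomial \<open>L\<close> gives the subspace
  polynomial \<open>\<Prod>a\<in>\<bbbF>\<^sub>q. L (x - a b) = L(x)\<^sup>q - \<beta>\<^bsup>q - 1\<^esup> L(x)\<close> with \<open>\<beta> = L(b)\<close>, because \<open>L\<close> is
  \<open>\<bbbF>\<^sub>q\<close>-linear; this is where the coefficients \<open>c'\<close> come from.\<close>
lemma subspace_poly_linearized:
  fixes b :: "nat \<Rightarrow> 'a::{finite,field}"
  assumes char: "prime CHAR('a)" "q = CHAR('a) ^ e" and q2: "q \<ge> 2"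
    and card_K: "card (Fsub q :: 'a set) = q"
    and ind: "indep_over (Fsub q) b t"
  shows "\<exists>c. c t = 1 \<and> (\<forall>j>t. c j = 0) \<and>
           (\<forall>x. (\<Prod>g\<in>span_over (Fsub q) b t. x - g) = (\<Sum>j\<le>t. c j * x ^ (q ^ j)))"
  using ind
proof (induction t)
  case 0
  show ?case
    by (rule exI[of _ "\<lambda>j. if j = 0 then 1 else 0"]) simp
next
  case (Suc t)
  let ?K = "Fsub q :: 'a set"
  have K: "is_subfield ?K"
    by (rule Fsub_is_subfield[OF char])
  have ind_t: "indep_over ?K b t" and new: "b t \<notin> span_over ?K b t"
    using indep_over_SucD[OF K Suc.prems] by auto
  obtain c where c: "c t = 1" "\<forall>j>t. c j = 0"
    "\<And>x. (\<Prod>g\<in>span_over ?K b t. x - g) = (\<Sum>j\<le>t. c j * x ^ (q ^ j))"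
    using Suc.IH[OF ind_t] by blast
  define L where "L x = (\<Sum>j\<le>t. c j * x ^ (q ^ j))" for x
  have L_diff: "L (x - y) = L x - L y" for x y
    unfolding L_def by (rule linearized_diff[OF char])
  have L_smult: "L (a * y) = a * L y" if "a \<in> ?K" for a y
    unfolding L_def by (rule linearized_smult[OF that])
  define \<beta> where "\<beta> = L (b t)"
  define c' where "c' j = (if j = 0 then 0 else c (j - 1) ^ q) - \<beta> ^ (q - 1) * c j" for j
  have "(\<Prod>g\<in>span_over ?K b (Suc t). x - g) = (\<Sum>j\<le>Suc t. c' j * x ^ (q ^ j))" for x
  proof -
    have "(\<Prod>g\<in>span_over ?K b (Suc t). x - g) = (\<Prod>a\<in>?K. \<Prod>g\<in>span_over ?K b t. (x - a * b t) - g)"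
      unfolding prod_span_over_Suc[OF K new] by (simp add: diff_diff_eq add.commute)
    also have "\<dots> = (\<Prod>a\<in>?K. L (x - a * b t))"
      unfolding L_def c(3) ..
    also have "\<dots> = (\<Prod>a\<in>?K. L x - a * \<beta>)"
      by (intro prod.cong) (auto simp: L_diff L_smult \<beta>_def)
    also have "\<dots> = L x ^ q - \<beta> ^ (q - 1) * L x"
      by (rule prod_Fsub_diff_mult[OF card_K q2])
    also have "L x ^ q = (\<Sum>j\<le>Suc t. (if j = 0 then 0 else c (j - 1) ^ q) * x ^ (q ^ j))"
      unfolding L_def by (rule linearized_power[OF char])
    also have "L x = (\<Sum>j\<le>Suc t. c j * x ^ (q ^ j))"
      unfolding L_def using c(2) by simp
    also have "(\<Sum>j\<le>Suc t. (if j = 0 then 0 else c (j - 1) ^ q) * x ^ (q ^ j))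
        - \<beta> ^ (q - 1) * (\<Sum>j\<le>Suc t. c j * x ^ (q ^ j)) = (\<Sum>j\<le>Suc t. c' j * x ^ (q ^ j))"
      unfolding c'_def left_diff_distrib sum_subtractf sum_distrib_left by (simp add: mult.assoc)
    finally show ?thesis .
  qed
  moreover have "c' (Suc t) = 1" "\<forall>j>Suc t. c' j = 0"
    using c q2 by (auto simp: c'_def)
  ultimately show ?case
    by blast
qed

lemma subspace_poly:
  fixes V :: "'a::{finite,field} set"
  assumes char: "prime CHAR('a)" "q = CHAR('a) ^ e" and q2: "q \<ge> 2"
    and card_K: "card (Fsub q :: 'a set) = q"
    and dim: "dim_over (Fsub q) V k"
  obtains c where "c k = 1" "\<And>x. (\<Sum>j\<le>k. c j * x ^ (q ^ j)) = 0 \<longleftrightarrow> x \<in> V"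
proof -
  obtain b where b: "indep_over (Fsub q) b k" "span_over (Fsub q) b k = V"
    using dim_over_imp_span_over[OF dim] .
  obtain c where c: "c k = 1"
    "\<forall>x. (\<Prod>g\<in>span_over (Fsub q) b k. x - g) = (\<Sum>j\<le>k. c j * x ^ (q ^ j))"
    using subspace_poly_linearized[OF char q2 card_K b(1)] by blast
  show ?thesis
  proof (rule that[where c = c, OF c(1)])
    fix x
    show "(\<Sum>j\<le>k. c j * x ^ (q ^ j)) = 0 \<longleftrightarrow> x \<in> V"
      using c(2)[rule_format, of x, symmetric] b(2) by simp
  qed
qed

lemma mult_mem_if_odd_coeffs_vanish:
  assumes roots: "\<And>x. (\<Sum>j\<le>k. c j * x ^ (q ^ j)) = 0 \<longleftrightarrow> x \<in> V"
    and odd_zero: "\<And>j. j \<le> k \<Longrightarrow> odd j \<Longrightarrow> c j = 0"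
    and "a \<in> Fsub (q ^ 2)" "x \<in> V"
  shows "a * x \<in> V"
proof -
  have summand: "c j * (a * x) ^ (q ^ j) = a * (c j * x ^ (q ^ j))" if "j \<le> k" for j
  proof (cases "odd j")
    case False
    then obtain h where "j = 2 * h"
      by blast
    then have "a ^ (q ^ j) = a"
      using Fsub_power_power[OF \<open>a \<in> Fsub (q ^ 2)\<close>, of h] by (simp add: power_mult)
    then show ?thesis
      by (simp add: power_mult_distrib)
  qed (use odd_zero that in simp)
  have "(\<Sum>j\<le>k. c j * (a * x) ^ (q ^ j)) = a * (\<Sum>j\<le>k. c j * x ^ (q ^ j))"
    unfolding sum_distrib_left using summand by (intro sum.cong) auto
  also have "\<dots> = 0"
    using roots \<open>x \<in> V\<close> by simp
  finally show ?thesis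
    using roots by blast
qed

text \<open>The divided difference of \<open>x\<^sup>t\<close> on the nodes \<open>A\<close>; it equals the complete homogeneous
  symmetric polynomial of degree \<open>t + 1 - card A\<close> in \<open>A\<close>.\<close>
definition divdiff_power :: "'a::field set \<Rightarrow> nat \<Rightarrow> 'a" where
  "divdiff_power A t = (\<Sum>g\<in>A. g ^ t / (\<Prod>h\<in>A - {g}. g - h))"

lemma divdiff_power_Suc:
  assumes "finite A" "a \<in> A"
  shows "divdiff_power A (Suc t) - a * divdiff_power A t = divdiff_power (A - {a}) t"
proof -
  have "divdiff_power A (Suc t) - a * divdiff_power A t
      = (\<Sum>g\<in>A. g ^ t * (g - a) / (\<Prod>h\<in>A - {g}. g - h))"
    unfolding divdiff_power_def
    by (simp add: sum_distrib_left sum_subtractf[symmetric] diff_divide_distrib algebra_simps)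
  also have "\<dots> = (\<Sum>g\<in>A - {a}. g ^ t * (g - a) / (\<Prod>h\<in>A - {g}. g - h))"
    using assms by (intro sum.mono_neutral_right) auto
  also have "\<dots> = (\<Sum>g\<in>A - {a}. g ^ t / (\<Prod>h\<in>A - {a} - {g}. g - h))"
  proof (intro sum.cong refl)
    fix g assume g: "g \<in> A - {a}"
    have "(\<Prod>h\<in>A - {g}. g - h) = (g - a) * (\<Prod>h\<in>A - {g} - {a}. g - h)"
      using g assms by (subst prod.remove[of _ a]) auto
    moreover have "A - {g} - {a} = A - {a} - {g}"
      by blast
    ultimately show "g ^ t * (g - a) / (\<Prod>h\<in>A - {g}. g - h) = g ^ t / (\<Prod>h\<in>A - {a} - {g}. g - h)"
      using g by simp
  qed
  finally show ?thesis
    unfolding divdiff_power_def .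
qed

lemma divdiff_power_diff_nodes:
  assumes "finite A" "a \<in> A" "b \<in> A"
  shows "(a - b) * divdiff_power A t = divdiff_power (A - {b}) t - divdiff_power (A - {a}) t"
proof -
  have "divdiff_power (A - {b}) t - divdiff_power (A - {a}) t
      = (divdiff_power A (Suc t) - b * divdiff_power A t)
        - (divdiff_power A (Suc t) - a * divdiff_power A t)"
    using divdiff_power_Suc[OF assms(1,2)] divdiff_power_Suc[OF assms(1,3)] by simp
  also have "\<dots> = (a - b) * divdiff_power A t"
    by (simp add: algebra_simps)
  finally show ?thesis ..
qed

lemma divdiff_power_values:
  assumes "finite A" "card A = N" "N \<ge> 1"
  shows "(\<forall>t. t + 1 < N \<longrightarrow> divdiff_power A t = 0) \<and> divdiff_power A (N - 1) = 1"
  using assms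
proof (induction N arbitrary: A rule: nat_less_induct)
  case (1 N A)
  show ?case
  proof (cases "N = 1")
    case True
    then obtain a where "A = {a}"
      using 1 card_1_singletonE by metis
    with True show ?thesis
      by (simp add: divdiff_power_def)
  next
    case False
    with 1 have "\<not> card A \<le> Suc 0"
      by simp
    then obtain a b where ab: "a \<in> A" "b \<in> A" "a \<noteq> b"
      using card_le_Suc0_iff_eq[OF \<open>finite A\<close>] by blast
    have IH: "(\<forall>t. t + 1 < N - 1 \<longrightarrow> divdiff_power (A - {x}) t = 0)
        \<and> divdiff_power (A - {x}) (N - 2) = 1" if "x \<in> A" for x
    proof -
      have "card (A - {x}) = N - 1" "N - 1 - 1 = N - 2"
        using 1 that by auto
      then show ?thesis
        using "1.IH"[rule_format, of "N - 1" "A - {x}"] 1 False by simp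
    qed
    have vanish: "divdiff_power A t = 0" if "t + 1 < N" for t
    proof -
      have removed: "divdiff_power (A - {a}) t = divdiff_power (A - {b}) t"
      proof (cases "t + 1 < N - 1")
        case False
        with that have "t = N - 2"
          by linarith
        then show ?thesis
          using IH[OF ab(1)] IH[OF ab(2)] by simp
      qed (use IH[OF ab(1)] IH[OF ab(2)] in simp)
      then have "(a - b) * divdiff_power A t = 0"
        using divdiff_power_diff_nodes[OF \<open>finite A\<close> ab(1,2)] by simp
      then show ?thesis
        using ab(3) by simp
    qed
    have N: "Suc (N - 2) = N - 1" "N - 2 + 1 < N"
      using False 1 by auto
    then have "divdiff_power A (N - 1) = divdiff_power (A - {a}) (N - 2)"
      using divdiff_power_Suc[OF \<open>finite A\<close> ab(1), of "N - 2"] vanish[of "N - 2"] by simp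
    also have "\<dots> = 1"
      using IH[OF ab(1)] by simp
    finally have "divdiff_power A (N - 1) = 1" .
    with vanish show ?thesis
      by blast
  qed
qed

lemma power_sum_additive_subgroup:
  fixes V :: "'a::field set"
  assumes "finite V" "0 \<in> V" and diff: "\<And>x y. x \<in> V \<Longrightarrow> y \<in> V \<Longrightarrow> x - y \<in> V"
  shows "t + 1 < card V \<Longrightarrow> (\<Sum>g\<in>V. g ^ t) = 0"
    and "(\<Sum>g\<in>V. g ^ (card V - 1)) = (\<Prod>h\<in>V - {0}. - h)"
proof -
  define P where "P = (\<Prod>h\<in>V - {0}. - h)"
  have "P \<noteq> 0"
    unfolding P_def using assms(1) by simp
  have add: "x + y \<in> V" if "x \<in> V" "y \<in> V" for x y
    using diff[OF that(1) diff[OF \<open>0 \<in> V\<close> that(2)]] by simp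
  \<comment> \<open>translating by \<open>g\<close> permutes \<open>V\<close>, so all denominators of the divided difference equal \<open>P\<close>\<close>
  have "(\<Prod>h\<in>V - {g}. g - h) = P" if "g \<in> V" for g
    unfolding P_def
    by (rule prod.reindex_bij_witness[of _ "\<lambda>h'. h' + g" "\<lambda>h. h - g"]) (use add diff that in auto)
  then have sum_eq: "(\<Sum>g\<in>V. g ^ t) = P * divdiff_power V t" for t
    unfolding divdiff_power_def using \<open>P \<noteq> 0\<close> by (simp flip: sum_divide_distrib)
  have "(\<forall>t. t + 1 < card V \<longrightarrow> divdiff_power V t = 0) \<and> divdiff_power V (card V - 1) = 1"
    using assms by (intro divdiff_power_values) (auto simp: Suc_le_eq card_gt_0_iff)
  then show "t + 1 < card V \<Longrightarrow> (\<Sum>g\<in>V. g ^ t) = 0"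
    and "(\<Sum>g\<in>V. g ^ (card V - 1)) = P"
    using sum_eq by simp_all
qed

lemma power_sum_shift:
  fixes V :: "'a::field set"
  assumes roots: "\<And>g. g \<in> V \<Longrightarrow> (\<Sum>j\<le>k. c j * g ^ (q ^ j)) = 0" and "c k = 1"
  shows "(\<Sum>g\<in>V. g ^ (w + q ^ k)) = - (\<Sum>j<k. c j * (\<Sum>g\<in>V. g ^ (w + q ^ j)))"
proof -
  have "0 = (\<Sum>g\<in>V. g ^ w * (\<Sum>j\<le>k. c j * g ^ (q ^ j)))"
    using roots by simp
  also have "\<dots> = (\<Sum>j\<le>k. c j * (\<Sum>g\<in>V. g ^ (w + q ^ j)))"
    by (simp add: sum_distrib_left sum_distrib_right power_add mult_ac sum.swap[of _ V])
  also have "\<dots> = (\<Sum>j<k. c j * (\<Sum>g\<in>V. g ^ (w + q ^ j))) + (\<Sum>g\<in>V. g ^ (w + q ^ k))"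
    using \<open>c k = 1\<close> by (simp add: lessThan_Suc_atMost[symmetric])
  finally show ?thesis
    by (simp add: eq_neg_iff_add_eq_0 add.commute)
qed

lemma power_sum_shifted_vanish:
  fixes V :: "'a::field set"
  assumes q2: "q \<ge> 2" and "i < k" "j < k" "j \<noteq> i"
    and roots: "\<And>g. g \<in> V \<Longrightarrow> (\<Sum>j\<le>k. c j * g ^ (q ^ j)) = 0" and ck: "c k = 1"
    and vanish: "\<And>t. t + 1 < q ^ k \<Longrightarrow> (\<Sum>g\<in>V. g ^ t) = 0"
  shows "(\<Sum>g\<in>V. g ^ (q ^ k - q ^ i - 1 + q ^ j)) = 0"
proof -
  have less: "q ^ j < q ^ j'" if "j < j'" for j j'
    using that q2 by (simp add: power_strict_increasing)
  show ?thesis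
  proof (cases "j < i")
    case True
    with less[OF \<open>i < k\<close>] less[OF True] show ?thesis
      by (intro vanish) linarith
  next
    case False
    with \<open>j \<noteq> i\<close> have ij: "i < j"
      by simp
    have "q ^ k = q * q ^ (k - 1)"
      using \<open>i < k\<close> by (cases k) auto
    then have top: "2 * q ^ (k - 1) \<le> q ^ k"
      using q2 by simp
    have "q ^ k - q ^ i - 1 + q ^ j = (q ^ j - q ^ i - 1) + q ^ k"
      using less[OF \<open>i < k\<close>] less[OF ij] by linarith
    then have "(\<Sum>g\<in>V. g ^ (q ^ k - q ^ i - 1 + q ^ j))
        = - (\<Sum>h<k. c h * (\<Sum>g\<in>V. g ^ (q ^ j - q ^ i - 1 + q ^ h)))"
      using power_sum_shift[OF roots ck] by simp
    also have "\<dots> = 0"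
    proof -
      have "(\<Sum>g\<in>V. g ^ (q ^ j - q ^ i - 1 + q ^ h)) = 0" if "h < k" for h
      proof -
        have "q ^ j \<le> q ^ (k - 1)" "q ^ h \<le> q ^ (k - 1)"
          using \<open>j < k\<close> \<open>h < k\<close> q2 by (auto intro: power_increasing)
        moreover have "q ^ i \<ge> 1"
          using q2 by simp
        ultimately show ?thesis
          using top less[OF ij] by (intro vanish) linarith
      qed
      then show ?thesis
        by simp
    qed
    finally show ?thesis .
  qed
qed

text \<open>One application of \<open>power_sum_shift\<close> to \<open>w = q\<^sup>k - q\<^sup>i - 1\<close> leaves only the term \<open>j = i\<close>:
  the exponents \<open>w + q\<^sup>j\<close> with \<open>j < i\<close> are below \<open>q\<^sup>k - 1\<close>, and those with \<open>j > i\<close> fall below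
  \<open>q\<^sup>k - 1\<close> after a second application.\<close>
lemma power_sum_critical_exponent:
  fixes V :: "'a::field set"
  assumes q2: "q \<ge> 2" and ik: "i < k"
    and roots: "\<And>g. g \<in> V \<Longrightarrow> (\<Sum>j\<le>k. c j * g ^ (q ^ j)) = 0" and ck: "c k = 1"
    and vanish: "\<And>t. t + 1 < q ^ k \<Longrightarrow> (\<Sum>g\<in>V. g ^ t) = 0"
  shows "(\<Sum>g\<in>V. g ^ (2 * q ^ k - q ^ i - 1)) = - c i * (\<Sum>g\<in>V. g ^ (q ^ k - 1))"
proof -
  define S where "S t = (\<Sum>g\<in>V. g ^ t)" for t
  have qi: "q ^ i < q ^ k"
    using ik q2 by (simp add: power_strict_increasing)
  then have "2 * q ^ k - q ^ i - 1 = (q ^ k - q ^ i - 1) + q ^ k"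
    by linarith
  then have "S (2 * q ^ k - q ^ i - 1) = - (\<Sum>j<k. c j * S (q ^ k - q ^ i - 1 + q ^ j))"
    unfolding S_def using power_sum_shift[OF roots ck] by simp
  also have "(\<Sum>j<k. c j * S (q ^ k - q ^ i - 1 + q ^ j)) = c i * S (q ^ k - q ^ i - 1 + q ^ i)"
    using ik power_sum_shifted_vanish[OF q2 ik _ _ roots ck vanish] unfolding S_def
    by (subst sum.remove[of _ i]) (auto intro!: sum.neutral)
  also have "q ^ k - q ^ i - 1 + q ^ i = q ^ k - 1"
    using qi by linarith
  finally show ?thesis
    unfolding S_def by simp
qed

lemma dim_over_less_if_proper:
  fixes V :: "'a::{finite,field} set"
  assumes "is_subfield K" "card K = q" "q \<ge> 2" "card (UNIV :: 'a set) = q ^ n"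
    and "dim_over K V k" "V \<noteq> UNIV"
  shows "k < n"
proof -
  have "card V < card (UNIV :: 'a set)"
    using psubsetI[OF subset_UNIV assms(6)] by (rule psubset_card_mono[OF finite_UNIV])
  moreover have "card V = q ^ k"
    using card_dim_over[OF assms(1) _ assms(5)] assms(2) by simp
  ultimately have "q ^ k < q ^ n"
    using assms(4) by simp
  then show ?thesis
    by (rule power_less_imp_less_exp[rotated]) (use assms(3) in simp)
qed

lemma exists_nonzero_power_sum:
  fixes V :: "'a::{finite,field} set"
  assumes char: "prime CHAR('a)" "q = CHAR('a) ^ e" and q2: "q \<ge> 2"
    and card_K: "card (Fsub q :: 'a set) = q"
    and dim: "dim_over (Fsub q) V k" and "even k"
    and not_closed: "\<not> (\<forall>a\<in>Fsub (q ^ 2). \<forall>x\<in>V. a * x \<in> V)"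
  obtains i where "odd i" "i < k" "(\<Sum>g\<in>V. g ^ (2 * q ^ k - q ^ i - 1)) \<noteq> 0"
proof -
  obtain c where ck: "c k = 1" and roots: "\<And>x. (\<Sum>j\<le>k. c j * x ^ (q ^ j)) = 0 \<longleftrightarrow> x \<in> V"
    using subspace_poly[OF char q2 card_K dim] by blast
  have "\<exists>i\<le>k. odd i \<and> c i \<noteq> 0"
  proof (rule ccontr)
    assume "\<not> (\<exists>i\<le>k. odd i \<and> c i \<noteq> 0)"
    then have "\<forall>a\<in>Fsub (q ^ 2). \<forall>x\<in>V. a * x \<in> V"
      by (intro ballI mult_mem_if_odd_coeffs_vanish[OF roots]) auto
    with not_closed show False ..
  qed
  then obtain i where i: "odd i" "i \<le> k" "c i \<noteq> 0"
    by blast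
  with \<open>even k\<close> have "i < k"
    by (cases "i = k") auto
  have K: "is_subfield (Fsub q :: 'a set)"
    by (rule Fsub_is_subfield[OF char])
  have V: "subspace_over (Fsub q) V"
    using dim unfolding dim_over_def by blast
  have card_V: "card V = q ^ k"
    using card_dim_over[OF K _ dim] card_K by simp
  have "0 \<in> V" and diff: "\<And>x y. x \<in> V \<Longrightarrow> y \<in> V \<Longrightarrow> x - y \<in> V"
    using V subspace_over_diff[OF K V] unfolding subspace_over_def by auto
  note power_sums = power_sum_additive_subgroup[OF finite \<open>0 \<in> V\<close> diff]
  have "(\<Sum>g\<in>V. g ^ (2 * q ^ k - q ^ i - 1)) = - c i * (\<Sum>g\<in>V. g ^ (q ^ k - 1))"
    using power_sums(1) card_V
    by (intro power_sum_critical_exponent[where c = c, OF q2 \<open>i < k\<close> _ ck]) (auto simp: roots)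
  also have "\<dots> \<noteq> 0"
    using power_sums(2) card_V i(3) by simp
  finally show ?thesis
    by (rule that[OF i(1) \<open>i < k\<close>])
qed

lemma not_closed_under_Fsq:
  fixes V :: "'a::{finite,field} set"
  assumes char: "prime CHAR('a)" "q = CHAR('a) ^ e" and q2: "q \<ge> 2"
    and card_K: "card (Fsub q :: 'a set) = q"
    and card_K2: "card (Fsub (q ^ 2) :: 'a set) = q ^ 2"
    and dim: "dim_over (Fsub q) V (2 * d)" and not_dim: "\<not> dim_over (Fsub (q ^ 2)) V d"
  shows "\<not> (\<forall>a\<in>Fsub (q ^ 2). \<forall>x\<in>V. a * x \<in> V)"
proof
  assume closed: "\<forall>a\<in>Fsub (q ^ 2). \<forall>x\<in>V. a * x \<in> V"
  have K2: "is_subfield (Fsub (q ^ 2) :: 'a set)"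
    using Fsub_is_subfield[OF char(1), of "q ^ 2" "e * 2"] char(2) by (simp add: power_mult)
  have "subspace_over (Fsub (q ^ 2)) V"
    using dim closed unfolding dim_over_def subspace_over_def by blast
  moreover have "card V = card (Fsub (q ^ 2) :: 'a set) ^ d"
    using card_dim_over[OF Fsub_is_subfield[OF char] _ dim] card_K card_K2
    by (simp add: power_mult)
  moreover have "2 * 1 \<le> q * q"
    using q2 by (intro mult_le_mono) auto
  then have "card (Fsub (q ^ 2) :: 'a set) \<ge> 2"
    using card_K2 by (simp add: power2_eq_square)
  ultimately have "dim_over (Fsub (q ^ 2)) V d"
    using dim_over_if_card[OF K2] by simp
  with not_dim show False ..
qed

lemma digit_of_expansion:
  assumes "\<And>j. d j < q"
  shows "digit q (\<Sum>j<N. d j * q ^ j) i = (if i < N then d i else 0)"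
  using assms
proof (induction i arbitrary: N d)
  case 0
  show ?case
  proof (cases N)
    case (Suc N')
    have "(\<Sum>j<N. d j * q ^ j) = d 0 + q * (\<Sum>j<N'. d (Suc j) * q ^ j)"
      unfolding Suc sum.lessThan_Suc_shift by (simp add: sum_distrib_left mult_ac)
    then show ?thesis
      using "0.prems"[of 0] Suc by (simp add: digit_def)
  qed (simp add: digit_def)
next
  case (Suc i)
  show ?case
  proof (cases N)
    case (Suc N')
    have q0: "q > 0"
      using Suc.prems[of 0] by simp
    have "(\<Sum>j<N. d j * q ^ j) = d 0 + q * (\<Sum>j<N'. d (Suc j) * q ^ j)"
      unfolding Suc sum.lessThan_Suc_shift by (simp add: sum_distrib_left mult_ac)
    then have "(\<Sum>j<N. d j * q ^ j) div q = (\<Sum>j<N'. d (Suc j) * q ^ j)"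
      using Suc.prems[of 0] q0 by simp
    then have "digit q (\<Sum>j<N. d j * q ^ j) (Suc i) = digit q (\<Sum>j<N'. d (Suc j) * q ^ j) i"
      unfolding digit_def power_Suc div_mult2_eq by simp
    also have "\<dots> = (if i < N' then d (Suc i) else 0)"
      using Suc.IH[of "\<lambda>j. d (Suc j)" N'] Suc.prems by simp
    finally show ?thesis
      using Suc by simp
  qed (simp add: digit_def)
qed

lemma sum_max_digits:
  fixes q :: nat
  assumes "q \<ge> 1"
  shows "(\<Sum>j<k. (q - 1) * q ^ j) + 1 = q ^ k"
proof (induction k)
  case (Suc k)
  have "(\<Sum>j<Suc k. (q - 1) * q ^ j) + 1 = ((\<Sum>j<k. (q - 1) * q ^ j) + 1) + (q - 1) * q ^ k"
    by simp
  also have "\<dots> = q * q ^ k"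
    using Suc assms by (simp add: algebra_simps)
  finally show ?case
    by simp
qed simp

lemma card_odd_less_double: "card {j. j < 2 * a \<and> odd j} = a"
proof (induction a)
  case (Suc a)
  have "{j. j < 2 * Suc a \<and> odd j} = insert (2 * a + 1) {j. j < 2 * a \<and> odd j}"
    unfolding set_eq_iff by (simp, presburger)
  with Suc show ?case
    by simp
qed simp

lemma card_even_less_double: "card {j. j < 2 * a \<and> even j} = a"
proof (induction a)
  case (Suc a)
  have "{j. j < 2 * Suc a \<and> even j} = insert (2 * a) {j. j < 2 * a \<and> even j}"
    unfolding set_eq_iff by (simp, presburger)
  with Suc show ?case
    by simp
qed simp

lemma wt_eq_Osum_add_Esum: "wt q n u = Osum q n u + Esum q n u"
proof -
  have "{..<n} = {i. i < n \<and> odd i} \<union> {i. i < n \<and> even i}"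
    by auto
  then show ?thesis
    unfolding wt_def Osum_def Esum_def by (simp add: sum.union_disjoint disjoint_iff)
qed

lemma critical_exponent_bounds:
  fixes q :: nat
  assumes q2: "q \<ge> 2" and "i < k" "k < n"
  shows "2 * q ^ k - q ^ i - 1 \<in> {1..q ^ n - 1}"
proof -
  have "q ^ i < q ^ k"
    using assms by (simp add: power_strict_increasing)
  moreover have "q * q ^ k \<le> q ^ n"
    using assms by (metis Suc_leI power_Suc power_increasing one_le_numeral le_trans)
  moreover have "2 * q ^ k \<le> q * q ^ k"
    using q2 by simp
  ultimately show ?thesis
    unfolding atLeastAtMost_iff by linarith
qed

text \<open>\<open>2 q\<^sup>k - q\<^sup>i - 1 = q\<^sup>k + (q\<^sup>k - 1) - q\<^sup>i\<close>, and \<open>q\<^sup>k - 1\<close> has all its base-\<open>q\<close> digits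
  below \<open>k\<close> equal to \<open>q - 1\<close>.\<close>
lemma digit_critical_exponent:
  fixes q :: nat
  assumes q2: "q \<ge> 2" and "i < k" "k < n" "j < n"
  shows "digit q (2 * q ^ k - q ^ i - 1) j
    = (if j < k then if j = i then q - 2 else q - 1 else if j = k then 1 else 0)"
proof -
  define d where "d j = (if j < k then if j = i then q - 2 else q - 1 else if j = k then 1 else 0)" for j
  have "(\<Sum>j<k. d j * q ^ j) + q ^ i = (\<Sum>j<k. (q - 1) * q ^ j)"
  proof -
    have "(\<Sum>j<k. d j * q ^ j) = d i * q ^ i + (\<Sum>j\<in>{..<k} - {i}. (q - 1) * q ^ j)"
      using \<open>i < k\<close> by (simp add: sum.remove[of _ i] d_def)
    moreover have "(\<Sum>j<k. (q - 1) * q ^ j) = (q - 1) * q ^ i + (\<Sum>j\<in>{..<k} - {i}. (q - 1) * q ^ j)"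
      using \<open>i < k\<close> by (simp add: sum.remove[of _ i])
    moreover have "d i * q ^ i + q ^ i = (q - 1) * q ^ i"
      using q2 \<open>i < k\<close> by (simp add: d_def algebra_simps)
    ultimately show ?thesis
      by simp
  qed
  moreover have "(\<Sum>j<n. d j * q ^ j) = (\<Sum>j<Suc k. d j * q ^ j)"
    using \<open>k < n\<close> by (intro sum.mono_neutral_right) (auto simp: d_def)
  moreover have "q ^ i < q ^ k"
    using assms by (simp add: power_strict_increasing)
  ultimately have "(\<Sum>j<n. d j * q ^ j) = 2 * q ^ k - q ^ i - 1"
    using sum_max_digits[of q k] q2 by (simp add: d_def) linarith
  moreover have "d j < q" for j
    using q2 by (simp add: d_def)
  ultimately show ?thesis
    using digit_of_expansion[of d q n j] \<open>j < n\<close> by (simp add: d_def)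
qed

lemma digit_sums_critical_exponent:
  fixes q :: nat
  assumes q2: "q \<ge> 2" and k: "k = 2 * a" and i: "odd i" "i < k" and kn: "k < n"
  shows "Osum q n (2 * q ^ k - q ^ i - 1) = a * (q - 1) - 1"
    and "Esum q n (2 * q ^ k - q ^ i - 1) = a * (q - 1) + 1"
proof -
  note digit = digit_critical_exponent[OF q2 i(2) kn]
  have "Osum q n (2 * q ^ k - q ^ i - 1) = (\<Sum>j\<in>{j. j < k \<and> odd j}. if j = i then q - 2 else q - 1)"
    unfolding Osum_def using digit kn k
    by (intro sum.mono_neutral_cong_right) auto
  also have "\<dots> = (q - 2) + (\<Sum>j\<in>{j. j < k \<and> odd j} - {i}. q - 1)"
    using i by (simp add: sum.remove[of _ i])
  also have "\<dots> = (q - 2) + (a - 1) * (q - 1)"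
    using i card_odd_less_double[of a] k by (simp add: card_Diff_singleton)
  also have "\<dots> = a * (q - 1) - 1"
    using q2 i k by (cases a) (auto simp: algebra_simps)
  finally show "Osum q n (2 * q ^ k - q ^ i - 1) = a * (q - 1) - 1" .
  have "Esum q n (2 * q ^ k - q ^ i - 1) = (\<Sum>j\<in>insert k {j. j < k \<and> even j}. if j = k then 1 else q - 1)"
    unfolding Esum_def using digit kn k i
    by (intro sum.mono_neutral_cong_right) auto
  also have "\<dots> = 1 + (\<Sum>j\<in>{j. j < k \<and> even j}. q - 1)"
    by simp
  also have "\<dots> = a * (q - 1) + 1"
    using card_even_less_double[of a] k by simp
  finally show "Esum q n (2 * q ^ k - q ^ i - 1) = a * (q - 1) + 1" .
qed

lemma critical_exponent_mem_ZrI: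
  fixes \<alpha> :: "'a::field"
  assumes q2: "q \<ge> 2" and "even k" and i: "odd i" "i < k" and "k < n" and n: "n = 2 * m"
    and r: "r = int ((n - k) * (q - 1))" and "2 \<notin> I"
  shows "2 * q ^ k - q ^ i - 1 \<in> {1..q ^ n - 1}"
    and "\<alpha> ^ (2 * q ^ k - q ^ i - 1) \<in> ZrI q n m \<alpha> r I"
proof -
  obtain a where k: "k = 2 * a"
    using \<open>even k\<close> by blast
  note digits = digit_sums_critical_exponent[OF q2 k i \<open>k < n\<close>]
  show range: "2 * q ^ k - q ^ i - 1 \<in> {1..q ^ n - 1}"
    using critical_exponent_bounds[OF q2 i(2) \<open>k < n\<close>] .
  have "a \<ge> 1"
    using i k by simp
  then have "a * (q - 1) \<ge> 1"
    using q2 by simp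
  then have "\<bar>int (Osum q n (2 * q ^ k - q ^ i - 1)) - int (Esum q n (2 * q ^ k - q ^ i - 1))\<bar> = int 2"
    using digits by simp
  moreover have "wt q n (2 * q ^ k - q ^ i - 1) = k * (q - 1)"
  proof -
    have "k * (q - 1) = a * (q - 1) + a * (q - 1)"
      using k by simp
    then show ?thesis
      unfolding wt_eq_Osum_add_Esum digits using \<open>a * (q - 1) \<ge> 1\<close> by linarith
  qed
  moreover have "int (k * (q - 1)) = int (n * (q - 1)) - r"
    using r \<open>k < n\<close> by (simp add: of_nat_diff diff_mult_distrib)
  ultimately have "\<alpha> ^ (2 * q ^ k - q ^ i - 1) \<in> Theta q n \<alpha> r 2"
    unfolding Theta_def using range by auto
  moreover have "2 \<in> Mr q m r - I"
  proof -
    have "m \<ge> 2"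
      using \<open>k < n\<close> k n \<open>a \<ge> 1\<close> by linarith
    then have "2 \<le> m * (q - 1)"
      using q2 mult_le_mono[of 2 m 1 "q - 1"] by simp
    moreover have "even r"
      using r k n \<open>k < n\<close> by (simp add: even_of_nat_iff flip: diff_mult_distrib2)
    ultimately show ?thesis
      using \<open>2 \<notin> I\<close> unfolding Mr_def by simp
  qed
  ultimately show "\<alpha> ^ (2 * q ^ k - q ^ i - 1) \<in> ZrI q n m \<alpha> r I"
    unfolding ZrI_def by blast
qed

lemma indicator_notin_code:
  fixes V :: "'a::{finite,field} set"
  assumes "0 \<in> V" "c \<noteq> 0" and u: "u \<in> {1..q ^ n - 1}" "\<alpha> ^ u \<in> ZrI q n m \<alpha> r I"
    and "(\<Sum>g\<in>V. g ^ u) \<noteq> 0"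
  shows "(\<lambda>g. if g \<in> V - {0} then c else 0) \<notin> code q n m \<alpha> r I"
proof
  assume "(\<lambda>g. if g \<in> V - {0} then c else 0) \<in> code q n m \<alpha> r I"
  then have "0 = (\<Sum>g\<in>{g. g \<noteq> 0}. (if g \<in> V - {0} then c else 0) * g ^ u)"
    using u unfolding code_def by simp
  also have "\<dots> = (\<Sum>g\<in>V - {0}. c * g ^ u)"
    by (rule sum.mono_neutral_cong_right) auto
  also have "\<dots> = c * (\<Sum>g\<in>V. g ^ u)"
    using u(1) \<open>0 \<in> V\<close> by (simp add: sum.remove[of V 0] sum_distrib_left power_0_left)
  finally show False
    using assms by simp
qed

theorem lemma5p5:
  fixes p l m n \<rho> \<rho>' q :: nat and r :: int and I :: "nat set"
    and V :: "'a::{finite,field} set" and \<alpha> c :: 'a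
  assumes "prime p" and "l \<ge> 1" and "q = p ^ l"
    and "card (UNIV :: 'a set) = q ^ n"
    and "primitive_elem \<alpha>"
    and "m \<ge> 1" and "n = 2 * m"
    and "\<rho> \<le> n - 1" and "\<rho> = 2 * \<rho>'"
    and "r = int (\<rho> * (q - 1))"
    and "I \<subseteq> Mr q m r" and "{0, 2} \<inter> I = {0}"
    and "dim_over (Fsub q) V (n - \<rho>)"
    and "\<not> dim_over (Fsub (q ^ 2)) V (m - \<rho>')"
    and "c \<in> Fsub q" and "c \<noteq> 0"
  shows "(\<lambda>g. if g \<in> V - {0} then c else 0) \<notin> code q n m \<alpha> r I"
proof -
  define k where "k = n - \<rho>"
  have "CHAR('a) = p"
    using CHAR_eq_if_card_prime_power[where 'a = 'a, OF \<open>prime p\<close>, of "l * n"] assms(3,4)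
    by (simp add: power_mult)
  then have char: "prime CHAR('a)" "q = CHAR('a) ^ l"
    using assms(1,3) by simp_all
  have q2: "q \<ge> 2"
    using prime_ge_2_nat[OF \<open>prime p\<close>] self_le_power[of p l] assms(2,3) by simp
  have card_K: "card (Fsub q :: 'a set) = q" and card_K2: "card (Fsub (q ^ 2) :: 'a set) = q ^ 2"
    using card_Fsub_power[OF assms(5) q2 assms(4), of 1] card_Fsub_power[OF assms(5) q2 assms(4), of 2]
      assms(7) by simp_all
  have dim: "dim_over (Fsub q) V k" "k = 2 * (m - \<rho>')"
    using assms(7,9,13) by (simp_all add: k_def diff_mult_distrib2)
  have not_closed: "\<not> (\<forall>a\<in>Fsub (q ^ 2). \<forall>x\<in>V. a * x \<in> V)"
    using not_closed_under_Fsq[OF char q2 card_K card_K2 _ assms(14)] dim by simp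
  then have "V \<noteq> UNIV"
    by blast
  then have "k < n"
    by (rule dim_over_less_if_proper[OF Fsub_is_subfield[OF char] card_K q2 assms(4) dim(1)])
  have "even k"
    using dim(2) by simp
  then obtain i where i: "odd i" "i < k" and nonzero: "(\<Sum>g\<in>V. g ^ (2 * q ^ k - q ^ i - 1)) \<noteq> 0"
    using exists_nonzero_power_sum[OF char q2 card_K dim(1) _ not_closed] by blast
  have r: "r = int ((n - k) * (q - 1))"
    using assms(8,10) \<open>k < n\<close> unfolding k_def by (simp add: diff_diff_cancel)
  have "2 \<notin> I"
  proof
    assume "2 \<in> I"
    then have "(2 :: nat) \<in> {0, 2} \<inter> I"
      by simp
    with assms(12) show False
      by simp
  qed
  note u = critical_exponent_mem_ZrI[OF q2 \<open>even k\<close> i \<open>k < n\<close> assms(7) r this]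
  have "0 \<in> V"
    using dim(1) by (simp add: dim_over_def subspace_over_def)
  from this \<open>c \<noteq> 0\<close> u nonzero show ?thesis
    by (rule indicator_notin_code)
qed

end
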